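(* Let $G$ and $N$ be finite groups of the same order, let $\mathfrak{f}:G\to\mathrm{Aut}(N)$ be a homomorphism and let $\mathfrak{g}:G\to N$ be a bijective map such that $\mathfrak{g}(\sigma\tau)=\mathfrak{g}(\sigma)\cdot\mathfrak{f}(\sigma)(\mathfrak{g}(\tau))$ for all $\sigma,\tau\in G$. Let $M$ be any characteristic subgroup of $N$, and let $\theta_M:\mathrm{Aut}(N)\to\mathrm{Aut}(N/M)$, $\theta_M(\varphi)(\eta M)=\varphi(\eta)M$, be the natural homomorphism. Define $H=\mathfrak{g}^{-1}(M)$. Then $H$ is a subgroup of $G$ and $\mathcal{E}'(H,M)$ is non-empty. Moreover, if $N/M$ is solvable and $\ker(\theta_M\circ\mathfrak{f})$ is insolvable, then $H$ is insolvable.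
   Context: For a finite group $M$, let $\mathrm{Perm}(M)$ be the group of all permutations of the set $M$. A subgroup $\mathcal{G}\le \mathrm{Perm}(M)$ is regular if the map $\mathcal{G}\to M$, $\sigma\mapsto\sigma(1_M)$, is bijective. Let $\rho:M\to\mathrm{Perm}(M)$, $\rho(\eta)(x)=x\eta^{-1}$. The holomorph of $M$ is $\mathrm{Hol}(M)=\rho(M)\rtimes\mathrm{Aut}(M)\le\mathrm{Perm}(M)$. For a group $H$ with $|H|=|M|$, $\mathcal{E}'(H,M)$ denotes the set of regular subgroups of $\mathrm{Hol}(M)$ isomorphic to $H$. *)

theory Defs
  imports "HOL-Algebra.Algebra"
begin

definition characteristic :: "'a set \<Rightarrow> ('a, 'b) monoid_scheme \<Rightarrow> bool" where
  "characteristic M N \<longleftrightarrow> subgroup M N \<and> (\<forall>\<phi> \<in> auto N. \<phi> ` M = M)"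

definition theta :: "('a, 'b) monoid_scheme \<Rightarrow> 'a set \<Rightarrow> ('a \<Rightarrow> 'a) \<Rightarrow> ('a set \<Rightarrow> 'a set)" where
  "theta N M \<phi> = (\<lambda>C \<in> carrier (N Mod M). \<Union>\<eta>\<in>C. \<phi> \<eta> <#\<^bsub>N\<^esub> M)"

definition rho :: "('a, 'b) monoid_scheme \<Rightarrow> 'a \<Rightarrow> ('a \<Rightarrow> 'a)" where
  "rho M \<eta> = (\<lambda>x \<in> carrier M. x \<otimes>\<^bsub>M\<^esub> inv\<^bsub>M\<^esub> \<eta>)"

definition Hol :: "('a, 'b) monoid_scheme \<Rightarrow> ('a \<Rightarrow> 'a) set" where
  "Hol M = {compose (carrier M) (rho M \<eta>) \<alpha> | \<eta> \<alpha>. \<eta> \<in> carrier M \<and> \<alpha> \<in> auto M}"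

definition HolGroup :: "('a, 'b) monoid_scheme \<Rightarrow> ('a \<Rightarrow> 'a) monoid" where
  "HolGroup M = BijGroup (carrier M) \<lparr>carrier := Hol M\<rparr>"

text \<open>E'(H, M): regular subgroups of Hol(M) isomorphic to H.\<close>
definition E' :: "('c, 'd) monoid_scheme \<Rightarrow> ('a, 'b) monoid_scheme \<Rightarrow> ('a \<Rightarrow> 'a) set set" where
  "E' H M = {R. subgroup R (HolGroup M)
              \<and> bij_betw (\<lambda>\<sigma>. \<sigma> \<one>\<^bsub>M\<^esub>) R (carrier M)
              \<and> (BijGroup (carrier M)) \<lparr>carrier := R\<rparr> \<cong> H}"

end

theory Submission
  imports Defs
begin

(* Since M is stable under every f(sigma), the cocycle identity shows that H = g^-1(M) is a
  subgroup and that the maps x |-> g(sigma) f(sigma)(x) on M, for sigma in H, compose like H.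
  Each such map is right translation by g(sigma) after the automorphism
  conj(g(sigma)) o f(sigma) of M, so it lies in Hol(M); evaluating at 1 gives g(sigma),
  whence these maps form a regular subgroup of Hol(M) isomorphic to H.
  The kernel K of theta_M o f consists of the sigma for which f(sigma) fixes every coset of M,
  and on K the map sigma |-> g(sigma) M is a homomorphism to N/M with kernel H \<inter> K.
  Hence K is solvable as soon as H and N/M are.  No finiteness is used. *)

lemma (in group) conjugation_in_auto:
  assumes "x \<in> carrier G"
  shows "(\<lambda>y \<in> carrier G. x \<otimes> y \<otimes> inv x) \<in> auto G"
proof -
  have "(\<lambda>y \<in> carrier G. x \<otimes> y \<otimes> inv x) \<in> Bij (carrier G)"
    using conjugation_is_hom assms unfolding hom_def BijGroup_def by auto
  moreover have "(\<lambda>y \<in> carrier G. x \<otimes> y \<otimes> inv x) \<in> hom G G"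
    using assms by (intro homI) (simp_all add: m_assoc inv_solve_left)
  ultimately show ?thesis by (simp add: auto_def)
qed

lemma (in group) characteristic_imp_normal:
  assumes "characteristic M G"
  shows "M \<lhd> G"
proof -
  have M: "subgroup M G" and inv: "\<And>\<phi>. \<phi> \<in> auto G \<Longrightarrow> \<phi> ` M = M"
    using assms by (auto simp: characteristic_def)
  have "x \<otimes> h \<otimes> inv x \<in> M" if "x \<in> carrier G" "h \<in> M" for x h
    using inv[OF conjugation_in_auto[OF that(1)]] that subgroup.mem_carrier[OF M]
    by (metis (no_types, lifting) image_eqI restrict_apply')
  then show ?thesis by (simp add: normal_inv_iff M)
qed

lemma (in group) auto_restrict:
  assumes "\<phi> \<in> auto G" "subgroup M G" "\<phi> ` M = M"
  shows "restrict \<phi> M \<in> auto (G\<lparr>carrier := M\<rparr>)"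
proof -
  have "inj_on \<phi> M"
    using assms(1) subgroup.subset[OF assms(2)]
    by (auto simp: auto_def Bij_def bij_betw_def intro: inj_on_subset)
  then have "restrict \<phi> M \<in> Bij M"
    using assms(3) by (simp add: Bij_def bij_betw_def)
  moreover have "restrict \<phi> M \<in> hom (G\<lparr>carrier := M\<rparr>) (G\<lparr>carrier := M\<rparr>)"
    using assms(1) subgroup.subset[OF assms(2)] subgroup.m_closed[OF assms(2)] assms(3)
    by (intro homI) (auto simp: auto_def intro: hom_mult)
  ultimately show ?thesis by (simp add: auto_def)
qed

lemma (in group) rho_in_Bij:
  assumes "\<eta> \<in> carrier G"
  shows "rho G \<eta> \<in> Bij (carrier G)"
proof -
  have "bij_betw (rho G \<eta>) (carrier G) (carrier G)"
    by (rule bij_betw_byWitness[where f' = "rho G (inv \<eta>)"])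
      (use assms in \<open>auto simp: rho_def m_assoc\<close>)
  then show ?thesis by (simp add: Bij_def rho_def)
qed

lemma (in group) Hol_subset_Bij: "Hol G \<subseteq> carrier (BijGroup (carrier G))"
  by (auto simp: Hol_def BijGroup_def auto_def intro!: compose_Bij rho_in_Bij)

lemma subgroup_restrict_carrier:
  assumes "group K" "subgroup R K" "R \<subseteq> S" "S \<subseteq> carrier K"
  shows "subgroup R (K\<lparr>carrier := S\<rparr>)"
proof -
  interpret K: group K by fact
  have inv: "inv\<^bsub>K\<lparr>carrier := S\<rparr>\<^esub> x = inv\<^bsub>K\<^esub> x" if x: "x \<in> R" for x
  proof -
    have "inv\<^bsub>K\<lparr>carrier := S\<rparr>\<^esub> x = (THE y. y \<in> S \<and> x \<otimes>\<^bsub>K\<^esub> y = \<one>\<^bsub>K\<^esub> \<and> y \<otimes>\<^bsub>K\<^esub> x = \<one>\<^bsub>K\<^esub>)"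
      by (simp add: m_inv_def)
    also have "\<dots> = inv\<^bsub>K\<^esub> x"
      using x assms(2-4) subgroup.mem_carrier subgroup.m_inv_closed K.inv_equality
      by (intro the_equality) fastforce+
    finally show ?thesis .
  qed
  show ?thesis
    using assms(2,3) inv by (auto simp: subgroup_def)
qed

lemma regular_embedding_in_E':
  assumes "group K" "group M" "\<Phi> \<in> hom K (BijGroup (carrier M))" "\<Phi> ` carrier K \<subseteq> Hol M"
    and regular: "bij_betw (\<lambda>\<sigma>. \<Phi> \<sigma> \<one>\<^bsub>M\<^esub>) (carrier K) (carrier M)"
  shows "\<Phi> ` carrier K \<in> E' K M"
proof -
  interpret \<Phi>: group_hom K "BijGroup (carrier M)" \<Phi>
    using assms(1,3) group_BijGroup by (simp add: group_hom_def group_hom_axioms_def)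
  have sub: "subgroup (\<Phi> ` carrier K) (BijGroup (carrier M))"
    using \<Phi>.img_is_subgroup .
  have "inj_on \<Phi> (carrier K)"
    using regular by (auto simp: bij_betw_def inj_on_def)
  then have "\<Phi> \<in> iso K ((BijGroup (carrier M))\<lparr>carrier := \<Phi> ` carrier K\<rparr>)"
    using assms(3) by (auto simp: iso_def hom_def bij_betw_def)
  then have "(BijGroup (carrier M))\<lparr>carrier := \<Phi> ` carrier K\<rparr> \<cong> K"
    by (intro group.iso_sym[OF assms(1)] is_isoI)
  moreover have "subgroup (\<Phi> ` carrier K) (HolGroup M)"
    unfolding HolGroup_def
    using subgroup_restrict_carrier[OF group_BijGroup sub assms(4) group.Hol_subset_Bij[OF assms(2)]] .
  moreover have "bij_betw (\<lambda>\<sigma>. \<sigma> \<one>\<^bsub>M\<^esub>) (\<Phi> ` carrier K) (carrier M)"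
    using regular \<open>inj_on \<Phi> (carrier K)\<close> by (simp add: bij_betw_def inj_on_def image_image) blast
  ultimately show ?thesis by (simp add: E'_def)
qed

lemma (in normal) theta_rcos:
  assumes "\<phi> \<in> hom G G" "\<phi> ` H \<subseteq> H" "a \<in> carrier G"
  shows "theta G H \<phi> (H #> a) = H #> \<phi> a"
proof -
  have \<phi>a: "\<phi> a \<in> carrier G"
    using hom_in_carrier[OF assms(1,3)] .
  have "\<phi> \<eta> <# H = H #> \<phi> a" if \<eta>_coset: "\<eta> \<in> H #> a" for \<eta>
  proof -
    obtain h where h: "h \<in> H" "\<eta> = h \<otimes> a"
      using \<eta>_coset unfolding r_coset_def by blast
    have \<phi>h: "\<phi> h \<in> H"
      using assms(2) h(1) by blast
    have \<eta>: "\<phi> \<eta> = \<phi> h \<otimes> \<phi> a"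
      using hom_mult[OF assms(1) mem_carrier[OF h(1)] assms(3)] h(2) by simp
    then have "\<phi> \<eta> \<in> H #> \<phi> a"
      using rcosI[OF \<phi>h subset \<phi>a] by simp
    then have "H #> \<phi> a = H #> \<phi> \<eta>"
      by (rule repr_independence[OF _ \<phi>a subgroup_axioms])
    also have "\<dots> = \<phi> \<eta> <# H"
      using coset_eq \<eta> \<phi>a mem_carrier[OF \<phi>h] by simp
    finally show ?thesis ..
  qed
  moreover have "a \<in> H #> a"
    using rcos_self[OF assms(3) subgroup_axioms] .
  ultimately have "(\<Union>\<eta> \<in> H #> a. \<phi> \<eta> <# H) = H #> \<phi> a"
    by blast
  then show ?thesis
    using rcosetsI[OF subset assms(3)] by (simp add: theta_def FactGroup_def)
qed

lemma (in group) solvable_subgroup_subset: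
  assumes "subgroup U G" "subgroup V G" "U \<subseteq> V" "solvable (G\<lparr>carrier := V\<rparr>)"
  shows "solvable (G\<lparr>carrier := U\<rparr>)"
proof -
  have "group_hom (G\<lparr>carrier := U\<rparr>) (G\<lparr>carrier := V\<rparr>) id"
    using assms(1-3) subgroup_imp_group
    by (auto simp: group_hom_def group_hom_axioms_def hom_def)
  then show ?thesis
    using group_hom.inj_hom_imp_solvable assms(4) by (metis inj_on_id)
qed

lemma (in group_hom) solvable_of_solvable_kernel:
  assumes "solvable H" "solvable (G\<lparr>carrier := kernel G H h\<rparr>)"
  shows "solvable G"
proof -
  let ?Q = "H\<lparr>carrier := h ` carrier G\<rparr>"
  have solvable_image: "solvable ?Q"
    using H.solvable_subgroup_subset[OF img_is_subgroup H.subgroup_self] assms(1)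
      subgroup.subset[OF img_is_subgroup] by simp
  have onto_image: "group_hom G ?Q h"
    using H.subgroup_imp_group[OF img_is_subgroup]
    by (auto simp: group_hom_def group_hom_axioms_def hom_def)
  have inclusion: "group_hom (G\<lparr>carrier := kernel G H h\<rparr>) G id"
    using G.subgroup_imp_group[OF subgroup_kernel] subgroup.subset[OF subgroup_kernel]
    by (auto simp: group_hom_def group_hom_axioms_def hom_def)
  have "kernel G ?Q h = kernel G H h"
    by (simp add: kernel_def)
  then show ?thesis
    using solvable_condition[OF inclusion onto_image _ _ assms(2) solvable_image] by simp
qed

locale bijective_crossed_hom =
  G: group G + N: group N
  for G :: "('g, 'x) monoid_scheme" and N :: "('n, 'y) monoid_scheme"
    and f :: "'g \<Rightarrow> 'n \<Rightarrow> 'n" and g :: "'g \<Rightarrow> 'n" +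
  assumes f_hom: "f \<in> hom G (AutoGroup N)"
    and g_bij: "bij_betw g (carrier G) (carrier N)"
    and g_mult: "\<lbrakk>\<sigma> \<in> carrier G; \<tau> \<in> carrier G\<rbrakk> \<Longrightarrow> g (\<sigma> \<otimes>\<^bsub>G\<^esub> \<tau>) = g \<sigma> \<otimes>\<^bsub>N\<^esub> f \<sigma> (g \<tau>)"
begin

lemma f_auto: "\<sigma> \<in> carrier G \<Longrightarrow> f \<sigma> \<in> auto N"
  using hom_in_carrier[OF f_hom] by (simp add: AutoGroup_def)

lemma f_group_hom: "\<sigma> \<in> carrier G \<Longrightarrow> group_hom N N (f \<sigma>)"
  using f_auto N.is_group by (simp add: group_hom_def group_hom_axioms_def auto_def)

lemma f_closed [simp]: "\<lbrakk>\<sigma> \<in> carrier G; x \<in> carrier N\<rbrakk> \<Longrightarrow> f \<sigma> x \<in> carrier N"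
  by (rule group_hom.hom_closed[OF f_group_hom])

lemma f_mult: "\<lbrakk>\<sigma> \<in> carrier G; x \<in> carrier N; y \<in> carrier N\<rbrakk> \<Longrightarrow> f \<sigma> (x \<otimes>\<^bsub>N\<^esub> y) = f \<sigma> x \<otimes>\<^bsub>N\<^esub> f \<sigma> y"
  by (rule group_hom.hom_mult[OF f_group_hom])

lemma f_fixes_one [simp]: "\<sigma> \<in> carrier G \<Longrightarrow> f \<sigma> \<one>\<^bsub>N\<^esub> = \<one>\<^bsub>N\<^esub>"
  by (rule group_hom.hom_one[OF f_group_hom])

lemma f_compose: "\<lbrakk>\<sigma> \<in> carrier G; \<tau> \<in> carrier G; x \<in> carrier N\<rbrakk> \<Longrightarrow> f (\<sigma> \<otimes>\<^bsub>G\<^esub> \<tau>) x = f \<sigma> (f \<tau> x)"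
  using hom_mult[OF f_hom] f_auto by (simp add: AutoGroup_def BijGroup_def auto_def compose_def)

lemma f_one [simp]:
  assumes "x \<in> carrier N"
  shows "f \<one>\<^bsub>G\<^esub> x = x"
proof -
  interpret group_hom G "AutoGroup N" f
    using f_hom N.AutoGroup by (simp add: group_hom_def group_hom_axioms_def)
  show ?thesis
    using hom_one assms by (simp add: AutoGroup_def BijGroup_def)
qed

lemma g_closed [simp]: "\<sigma> \<in> carrier G \<Longrightarrow> g \<sigma> \<in> carrier N"
  using bij_betw_apply[OF g_bij] .

lemma g_one [simp]: "g \<one>\<^bsub>G\<^esub> = \<one>\<^bsub>N\<^esub>"
  using g_mult[of "\<one>\<^bsub>G\<^esub>" "\<one>\<^bsub>G\<^esub>"] N.l_cancel_one' by simp

end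

locale crossed_hom_invariant_subgroup = bijective_crossed_hom G N f g
  for G N f and g :: "'g \<Rightarrow> 'n" +
  fixes M :: "'n set"
  assumes M_subgroup: "subgroup M N"
    and f_image_M: "\<sigma> \<in> carrier G \<Longrightarrow> f \<sigma> ` M = M"
begin

definition H :: "'g set"
  where "H = {\<sigma> \<in> carrier G. g \<sigma> \<in> M}"

lemma M_carrier: "x \<in> M \<Longrightarrow> x \<in> carrier N"
  using subgroup.mem_carrier[OF M_subgroup] .

lemma f_in_M: "\<lbrakk>\<sigma> \<in> carrier G; x \<in> M\<rbrakk> \<Longrightarrow> f \<sigma> x \<in> M"
  using f_image_M by blast

lemma f_in_M_iff:
  assumes "\<sigma> \<in> carrier G" "x \<in> carrier N"
  shows "f \<sigma> x \<in> M \<longleftrightarrow> x \<in> M"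
proof
  assume "f \<sigma> x \<in> M"
  then obtain m where "m \<in> M" "f \<sigma> x = f \<sigma> m"
    using f_image_M[OF assms(1)] by force
  moreover have "inj_on (f \<sigma>) (carrier N)"
    using f_auto[OF assms(1)] by (simp add: auto_def Bij_def bij_betw_def)
  ultimately show "x \<in> M"
    using assms(2) M_carrier by (metis inj_onD)
qed (use f_image_M assms(1) in blast)

lemma subgroup_H: "subgroup H G"
proof (rule G.subgroupI)
  show "H \<subseteq> carrier G" "H \<noteq> {}"
    using subgroup.one_closed[OF M_subgroup] by (auto simp: H_def)
  show "\<sigma> \<otimes>\<^bsub>G\<^esub> \<tau> \<in> H" if "\<sigma> \<in> H" "\<tau> \<in> H" for \<sigma> \<tau>
    using that g_mult subgroup.m_closed[OF M_subgroup] f_in_M_iff by (auto simp: H_def)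
  show "inv\<^bsub>G\<^esub> \<sigma> \<in> H" if "\<sigma> \<in> H" for \<sigma>
  proof -
    have \<sigma>: "\<sigma> \<in> carrier G" "g \<sigma> \<in> M"
      using that by (auto simp: H_def)
    have "g \<sigma> \<otimes>\<^bsub>N\<^esub> f \<sigma> (g (inv\<^bsub>G\<^esub> \<sigma>)) = \<one>\<^bsub>N\<^esub>"
      using g_mult[of \<sigma> "inv\<^bsub>G\<^esub> \<sigma>"] \<sigma> by simp
    then have "f \<sigma> (g (inv\<^bsub>G\<^esub> \<sigma>)) = inv\<^bsub>N\<^esub> g \<sigma>"
      using \<sigma> N.inv_equality N.inv_comm by (metis G.inv_closed f_closed g_closed)
    then show ?thesis
      using \<sigma> f_in_M_iff[of \<sigma> "g (inv\<^bsub>G\<^esub> \<sigma>)"] subgroup.m_inv_closed[OF M_subgroup]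
      by (auto simp: H_def)
  qed
qed

lemma g_image_H: "g ` H = M"
  using g_bij subgroup.subset[OF M_subgroup] by (auto simp: H_def bij_betw_def)

definition hol_map :: "'g \<Rightarrow> 'n \<Rightarrow> 'n"
  where "hol_map \<sigma> = (\<lambda>x \<in> M. g \<sigma> \<otimes>\<^bsub>N\<^esub> f \<sigma> x)"

lemma hol_map_in_Hol:
  assumes "\<sigma> \<in> H"
  shows "hol_map \<sigma> \<in> Hol (N\<lparr>carrier := M\<rparr>)"
proof -
  let ?M = "N\<lparr>carrier := M\<rparr>"
  interpret M: group ?M
    using N.subgroup_imp_group[OF M_subgroup] .
  have \<sigma>: "\<sigma> \<in> carrier G" "g \<sigma> \<in> M"
    using assms by (auto simp: H_def)
  have inv_M: "inv\<^bsub>?M\<^esub> x = inv\<^bsub>N\<^esub> x" if "x \<in> M" for x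
    using N.m_inv_consistent[OF M_subgroup that] .
  define conj where "conj = (\<lambda>y \<in> M. g \<sigma> \<otimes>\<^bsub>N\<^esub> y \<otimes>\<^bsub>N\<^esub> inv\<^bsub>N\<^esub> g \<sigma>)"
  define \<alpha> where "\<alpha> = compose M conj (restrict (f \<sigma>) M)"
  have "conj \<in> auto ?M"
    using M.conjugation_in_auto[of "g \<sigma>"] \<sigma>(2) inv_M by (simp add: conj_def)
  moreover have "restrict (f \<sigma>) M \<in> auto ?M"
    using N.auto_restrict[OF f_auto[OF \<sigma>(1)] M_subgroup f_image_M[OF \<sigma>(1)]] .
  ultimately have \<alpha>: "\<alpha> \<in> auto ?M"
    using subgroup.m_closed[OF M.subgroup_auto] by (simp add: \<alpha>_def BijGroup_def auto_def)
  have "hol_map \<sigma> = compose M (rho ?M (inv\<^bsub>?M\<^esub> g \<sigma>)) \<alpha>"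
  proof (rule extensionalityI)
    fix x assume x: "x \<in> M"
    then have "compose M (rho ?M (inv\<^bsub>?M\<^esub> g \<sigma>)) \<alpha> x
        = g \<sigma> \<otimes>\<^bsub>N\<^esub> f \<sigma> x \<otimes>\<^bsub>N\<^esub> inv\<^bsub>N\<^esub> g \<sigma> \<otimes>\<^bsub>N\<^esub> g \<sigma>"
      using \<sigma> f_in_M M.inv_inv[of "g \<sigma>"] subgroup.m_closed[OF M_subgroup] subgroup.m_inv_closed[OF M_subgroup]
      by (simp add: compose_def rho_def \<alpha>_def conj_def)
    also have "\<dots> = hol_map \<sigma> x"
      using x \<sigma> M_carrier by (simp add: hol_map_def N.m_assoc)
    finally show "hol_map \<sigma> x = compose M (rho ?M (inv\<^bsub>?M\<^esub> g \<sigma>)) \<alpha> x" ..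
  qed (simp_all add: hol_map_def compose_def)
  then show ?thesis
    unfolding Hol_def using \<alpha> M.inv_closed \<sigma>(2) by auto
qed

lemma hol_map_one: "\<sigma> \<in> carrier G \<Longrightarrow> hol_map \<sigma> \<one>\<^bsub>N\<^esub> = g \<sigma>"
  using subgroup.one_closed[OF M_subgroup] by (simp add: hol_map_def)

lemma hol_map_mult:
  assumes "\<sigma> \<in> carrier G" "\<tau> \<in> H"
  shows "hol_map (\<sigma> \<otimes>\<^bsub>G\<^esub> \<tau>) = compose M (hol_map \<sigma>) (hol_map \<tau>)"
proof (rule extensionalityI)
  fix x assume x: "x \<in> M"
  have \<tau>: "\<tau> \<in> carrier G" "g \<tau> \<in> M"
    using assms(2) by (auto simp: H_def)
  then have "hol_map \<tau> x \<in> M"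
    using x f_in_M subgroup.m_closed[OF M_subgroup] by (simp add: hol_map_def)
  then have "compose M (hol_map \<sigma>) (hol_map \<tau>) x = g \<sigma> \<otimes>\<^bsub>N\<^esub> f \<sigma> (g \<tau> \<otimes>\<^bsub>N\<^esub> f \<tau> x)"
    using x by (simp add: compose_def hol_map_def)
  also have "\<dots> = hol_map (\<sigma> \<otimes>\<^bsub>G\<^esub> \<tau>) x"
    using x assms(1) \<tau> M_carrier by (simp add: hol_map_def g_mult f_mult f_compose N.m_assoc)
  finally show "hol_map (\<sigma> \<otimes>\<^bsub>G\<^esub> \<tau>) x = compose M (hol_map \<sigma>) (hol_map \<tau>) x" ..
qed (simp_all add: hol_map_def compose_def)

lemma hol_map_hom: "hol_map \<in> hom (G\<lparr>carrier := H\<rparr>) (BijGroup M)"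
proof -
  have Bij: "hol_map \<sigma> \<in> Bij M" if "\<sigma> \<in> H" for \<sigma>
    using group.Hol_subset_Bij[OF N.subgroup_imp_group[OF M_subgroup]] hol_map_in_Hol[OF that]
    by (auto simp: BijGroup_def)
  show ?thesis
    using Bij hol_map_mult subgroup.mem_carrier[OF subgroup_H]
    by (intro homI) (auto simp: BijGroup_def)
qed

lemma hol_map_image_in_E': "hol_map ` H \<in> E' (G\<lparr>carrier := H\<rparr>) (N\<lparr>carrier := M\<rparr>)"
proof -
  have "bij_betw g H M"
    using g_image_H inj_on_subset[of g "carrier G" H] g_bij by (auto simp: bij_betw_def H_def)
  then have "bij_betw (\<lambda>\<sigma>. hol_map \<sigma> \<one>\<^bsub>N\<^esub>) H M"
    using hol_map_one by (auto simp: H_def intro: bij_betw_cong[THEN iffD1])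
  then show ?thesis
    using regular_embedding_in_E'[of "G\<lparr>carrier := H\<rparr>" "N\<lparr>carrier := M\<rparr>" hol_map]
      G.subgroup_imp_group[OF subgroup_H] N.subgroup_imp_group[OF M_subgroup]
      hol_map_hom hol_map_in_Hol
    by auto
qed

definition coset_fixers :: "'g set"
  where "coset_fixers = {\<sigma> \<in> carrier G. \<forall>a \<in> carrier N. M #>\<^bsub>N\<^esub> f \<sigma> a = M #>\<^bsub>N\<^esub> a}"

context
  assumes M_normal: "M \<lhd> N"
begin

lemma theta_f_rcos:
  "\<lbrakk>\<sigma> \<in> carrier G; a \<in> carrier N\<rbrakk> \<Longrightarrow> theta N M (f \<sigma>) (M #>\<^bsub>N\<^esub> a) = M #>\<^bsub>N\<^esub> f \<sigma> a"
  using normal.theta_rcos[OF M_normal] f_auto f_image_M by (simp add: auto_def)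

lemma kernel_theta_f: "kernel G (AutoGroup (N Mod M)) (\<lambda>\<sigma>. theta N M (f \<sigma>)) = coset_fixers"
proof -
  have "theta N M (f \<sigma>) = (\<lambda>C \<in> rcosets\<^bsub>N\<^esub> M. C) \<longleftrightarrow> (\<forall>a \<in> carrier N. M #>\<^bsub>N\<^esub> f \<sigma> a = M #>\<^bsub>N\<^esub> a)"
    if \<sigma>: "\<sigma> \<in> carrier G" for \<sigma>
  proof -
    have "theta N M (f \<sigma>) \<in> extensional (rcosets\<^bsub>N\<^esub> M)"
      by (simp add: theta_def FactGroup_def)
    then have "theta N M (f \<sigma>) = (\<lambda>C \<in> rcosets\<^bsub>N\<^esub> M. C) \<longleftrightarrow> (\<forall>C \<in> rcosets\<^bsub>N\<^esub> M. theta N M (f \<sigma>) C = C)"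
      by (auto intro: extensionalityI)
    also have "\<dots> \<longleftrightarrow> (\<forall>a \<in> carrier N. M #>\<^bsub>N\<^esub> f \<sigma> a = M #>\<^bsub>N\<^esub> a)"
      using \<sigma> theta_f_rcos by (auto simp: RCOSETS_def)
    finally show ?thesis .
  qed
  then show ?thesis
    by (auto simp: kernel_def coset_fixers_def AutoGroup_def BijGroup_def FactGroup_def)
qed

lemma subgroup_coset_fixers: "subgroup coset_fixers G"
proof (rule G.subgroupI)
  show "coset_fixers \<subseteq> carrier G" "coset_fixers \<noteq> {}"
    by (auto simp: coset_fixers_def)
  show "\<sigma> \<otimes>\<^bsub>G\<^esub> \<tau> \<in> coset_fixers" if "\<sigma> \<in> coset_fixers" "\<tau> \<in> coset_fixers" for \<sigma> \<tau>
  proof -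
    have "M #>\<^bsub>N\<^esub> f (\<sigma> \<otimes>\<^bsub>G\<^esub> \<tau>) a = M #>\<^bsub>N\<^esub> a" if a: "a \<in> carrier N" for a
    proof -
      have "M #>\<^bsub>N\<^esub> f (\<sigma> \<otimes>\<^bsub>G\<^esub> \<tau>) a = theta N M (f \<sigma>) (M #>\<^bsub>N\<^esub> f \<tau> a)"
        using \<open>\<sigma> \<in> coset_fixers\<close> \<open>\<tau> \<in> coset_fixers\<close> a by (simp add: coset_fixers_def f_compose theta_f_rcos)
      also have "\<dots> = M #>\<^bsub>N\<^esub> a"
        using \<open>\<sigma> \<in> coset_fixers\<close> \<open>\<tau> \<in> coset_fixers\<close> a by (simp add: coset_fixers_def theta_f_rcos)
      finally show ?thesis .
    qed
    then show ?thesis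
      using that by (simp add: coset_fixers_def)
  qed
  show "inv\<^bsub>G\<^esub> \<sigma> \<in> coset_fixers" if "\<sigma> \<in> coset_fixers" for \<sigma>
  proof -
    have \<sigma>: "\<sigma> \<in> carrier G" "\<And>a. a \<in> carrier N \<Longrightarrow> M #>\<^bsub>N\<^esub> f \<sigma> a = M #>\<^bsub>N\<^esub> a"
      using that by (auto simp: coset_fixers_def)
    have "M #>\<^bsub>N\<^esub> f (inv\<^bsub>G\<^esub> \<sigma>) a = M #>\<^bsub>N\<^esub> a" if a: "a \<in> carrier N" for a
    proof -
      have "a = f \<sigma> (f (inv\<^bsub>G\<^esub> \<sigma>) a)"
        using \<sigma>(1) a f_compose[of \<sigma> "inv\<^bsub>G\<^esub> \<sigma>" a] by simp
      then show ?thesis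
        using \<sigma> a by (metis G.inv_closed f_closed)
    qed
    then show ?thesis
      using \<sigma>(1) by (simp add: coset_fixers_def)
  qed
qed

lemma coset_fixers_hom:
  "(\<lambda>\<sigma>. M #>\<^bsub>N\<^esub> g \<sigma>) \<in> hom (G\<lparr>carrier := coset_fixers\<rparr>) (N Mod M)"
proof (rule homI)
  interpret normal M N
    by (rule M_normal)
  show "M #>\<^bsub>N\<^esub> g \<sigma> \<in> carrier (N Mod M)" if "\<sigma> \<in> carrier (G\<lparr>carrier := coset_fixers\<rparr>)" for \<sigma>
    using that by (simp add: coset_fixers_def FactGroup_def N.rcosetsI subset)
  show "M #>\<^bsub>N\<^esub> g (\<sigma> \<otimes>\<^bsub>G\<lparr>carrier := coset_fixers\<rparr>\<^esub> \<tau>) = (M #>\<^bsub>N\<^esub> g \<sigma>) \<otimes>\<^bsub>N Mod M\<^esub> (M #>\<^bsub>N\<^esub> g \<tau>)"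
    if "\<sigma> \<in> carrier (G\<lparr>carrier := coset_fixers\<rparr>)" "\<tau> \<in> carrier (G\<lparr>carrier := coset_fixers\<rparr>)" for \<sigma> \<tau>
  proof -
    have \<sigma>: "\<sigma> \<in> carrier G" "M #>\<^bsub>N\<^esub> f \<sigma> (g \<tau>) = M #>\<^bsub>N\<^esub> g \<tau>" and \<tau>: "\<tau> \<in> carrier G"
      using that by (auto simp: coset_fixers_def)
    have "M #>\<^bsub>N\<^esub> g (\<sigma> \<otimes>\<^bsub>G\<^esub> \<tau>) = (M #>\<^bsub>N\<^esub> g \<sigma>) <#>\<^bsub>N\<^esub> (M #>\<^bsub>N\<^esub> f \<sigma> (g \<tau>))"
      using \<sigma>(1) \<tau> by (simp add: g_mult rcos_sum)
    then show ?thesis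
      using \<sigma>(2) by (simp add: FactGroup_def)
  qed
qed

lemma kernel_coset_fixers_hom:
  "kernel (G\<lparr>carrier := coset_fixers\<rparr>) (N Mod M) (\<lambda>\<sigma>. M #>\<^bsub>N\<^esub> g \<sigma>) = H \<inter> coset_fixers"
proof -
  have "M #>\<^bsub>N\<^esub> g \<sigma> = M \<longleftrightarrow> g \<sigma> \<in> M" if "\<sigma> \<in> carrier G" for \<sigma>
    using N.rcos_self[OF g_closed M_subgroup] N.coset_join2[OF g_closed M_subgroup] that by auto
  then show ?thesis
    by (auto simp: kernel_def FactGroup_def H_def coset_fixers_def)
qed

lemma solvable_coset_fixers:
  assumes "solvable (N Mod M)" "solvable (G\<lparr>carrier := H\<rparr>)"
  shows "solvable (G\<lparr>carrier := coset_fixers\<rparr>)"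
proof -
  interpret \<psi>: group_hom "G\<lparr>carrier := coset_fixers\<rparr>" "N Mod M" "\<lambda>\<sigma>. M #>\<^bsub>N\<^esub> g \<sigma>"
    using G.subgroup_imp_group[OF subgroup_coset_fixers] normal.factorgroup_is_group[OF M_normal]
      coset_fixers_hom
    by (simp add: group_hom_def group_hom_axioms_def)
  have "solvable (G\<lparr>carrier := H \<inter> coset_fixers\<rparr>)"
    using G.solvable_subgroup_subset[OF G.subgroups_Inter_pair[OF subgroup_H subgroup_coset_fixers] subgroup_H]
      assms(2) by blast
  then show ?thesis
    using \<psi>.solvable_of_solvable_kernel assms(1) kernel_coset_fixers_hom by simp
qed

end

end

theorem proposition3p3:
  fixes G :: "('g, 'x) monoid_scheme" and N :: "('n, 'y) monoid_scheme"
    and f :: "'g \<Rightarrow> ('n \<Rightarrow> 'n)" and g :: "'g \<Rightarrow> 'n" and M :: "'n set" and H :: "'g set"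
  assumes "group G" and "group N"
    and "finite (carrier G)" and "finite (carrier N)"
    and "card (carrier G) = card (carrier N)"
    and "f \<in> hom G (AutoGroup N)"
    and "bij_betw g (carrier G) (carrier N)"
    and "\<And>\<sigma> \<tau>. \<sigma> \<in> carrier G \<Longrightarrow> \<tau> \<in> carrier G \<Longrightarrow>
           g (\<sigma> \<otimes>\<^bsub>G\<^esub> \<tau>) = g \<sigma> \<otimes>\<^bsub>N\<^esub> f \<sigma> (g \<tau>)"
    and "characteristic M N"
    and "H = {\<sigma> \<in> carrier G. g \<sigma> \<in> M}"
  shows "subgroup H G \<and> E' (G\<lparr>carrier := H\<rparr>) (N\<lparr>carrier := M\<rparr>) \<noteq> {}
    \<and> ((solvable (N Mod M)
         \<and> \<not> solvable (G\<lparr>carrier := kernel G (AutoGroup (N Mod M)) (\<lambda>\<sigma>. theta N M (f \<sigma>))\<rparr>))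
        \<longrightarrow> \<not> solvable (G\<lparr>carrier := H\<rparr>))"
proof -
  interpret N: group N by fact
  have M_normal: "M \<lhd> N"
    using N.characteristic_imp_normal assms(9) .
  have f_image_M: "f \<sigma> ` M = M" if "\<sigma> \<in> carrier G" for \<sigma>
    using assms(9) hom_in_carrier[OF assms(6) that] by (simp add: characteristic_def AutoGroup_def)
  interpret crossed_hom_invariant_subgroup G N f g M
    using assms(1,2,6-9) f_image_M
    by (simp add: crossed_hom_invariant_subgroup_def crossed_hom_invariant_subgroup_axioms_def
        bijective_crossed_hom_def bijective_crossed_hom_axioms_def characteristic_def)
  have "subgroup H G"
    using subgroup_H unfolding H_def assms(10) .
  moreover have "E' (G\<lparr>carrier := H\<rparr>) (N\<lparr>carrier := M\<rparr>) \<noteq> {}"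
    using hol_map_image_in_E' unfolding H_def assms(10) by blast
  moreover have "solvable (G\<lparr>carrier := kernel G (AutoGroup (N Mod M)) (\<lambda>\<sigma>. theta N M (f \<sigma>))\<rparr>)"
    if "solvable (N Mod M)" "solvable (G\<lparr>carrier := H\<rparr>)"
    using solvable_coset_fixers[OF M_normal] kernel_theta_f[OF M_normal] that
    unfolding H_def assms(10) by simp
  ultimately show ?thesis
    by blast
qed

end
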